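(* Let $\mathcal{D}$ be a DCR graph and let $P$ be any process reachable from $\textsc{dcrpsi}(\mathcal{D})$ by a finite sequence of $\tau$-transitions $\mathbf{1}\triangleright P_0\xrightarrow{\tau}P_1\xrightarrow{\tau}\cdots\xrightarrow{\tau}P_n=P$ with $P_0=\textsc{dcrpsi}(\mathcal{D})$. Then $P$ contains exactly one unguarded output prefix, i.e. exactly one occurrence of an output prefix $\overline{M}\langle N\rangle.Q$ that does not occur underneath an input prefix, an output prefix, a $\mathbf{case}$ guard or a replication.
   Context: A DCR graph is a tuple $(E,M,\to\!\bullet,\bullet\!\to,\to\!\diamond,\to\!+,\to\!\%)$ where $E$ is a set of events (names from a nominal set), $M=(Ex',Re',In')$ is a triple of subsets of $E$ (the marking), and $\to\!\bullet,\bullet\!\to,\to\!\diamond,\to\!+,\to\!\%\subseteq E\times E$ are the condition, response, milestone, include and exclude relations. For a relation $\to$ write $e\!\to=\{f\mid e\to f\}$ and $\to\! e=\{f\mid f\to e\}$. dcrPsi instance: assertions are quadruples $(Ex,Re,In,G)$ with $Ex,Re,In\subseteq E$ and $G$ a natural number built from $0$ and successor $s(\cdot)$; terms are a distinguished channel name $m$ and assertions; conditions are triples $(Co,Mi,e)$ with $Co,Mi\subseteq E$, $e\in E$; channel equality is $=$; unit $\mathbf{1}=(\emptyset,\emptyset,\emptyset,0)$; composition: $(Ex,Re,In,G)\otimes(Ex',Re',In',G')$ equals the first argument if $G>G'$, the second if $G<G'$, and $(Ex\cup Ex',Re\cup Re',In\cup In',G)$ if $G=G'$; entailment: $(Ex,Re,In,G)\vdash(Co,Mi,e)$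 iff $e\in In$, $In\cap Co\subseteq Ex$ and $In\cap Mi\cap Re=\emptyset$. Psi-calculus: processes $\mathbf{0}$, $(\!|\Psi|\!)$, $\overline{M}\langle N\rangle.P$, $\underline{M}(\lambda\tilde x)N.P$, $\mathbf{case}\ \tilde\varphi:\tilde P$, $P\mid Q$, $!P$. Frames: $\mathcal{F}((\!|\Psi|\!))=\Psi$, $\mathcal{F}(P\mid Q)=\mathcal{F}(P)\otimes\mathcal{F}(Q)$, frame of $\mathbf{0}$, prefixed, case and replicated processes is $\mathbf{1}$. Transitions $\Psi\triangleright P\xrightarrow{\alpha}P'$ are generated by: (Out) if $\Psi\vdash M\leftrightarrow K$ then $\Psi\triangleright\overline{M}\langle N\rangle.P\xrightarrow{\overline{K}N}P$; (In) if $\Psi\vdash M\leftrightarrow K$ then $\Psi\triangleright\underline{M}(\lambda\tilde y)N.P\xrightarrow{\underline{K}N[\tilde y:=\tilde L]}P[\tilde y:=\tilde L]$ for any terms $\tilde L$; (Case) if $\Psi\triangleright P_i\xrightarrow{\alpha}P'$ and $\Psi\vdash\varphi_i$ then $\Psi\triangleright\mathbf{case}\ \tilde\varphi:\tilde P\xrightarrow{\alpha}P'$; (Par) if $\Psi\otimes\mathcal{F}(Q)\triangleright P\xrightarrow{\alpha}P'$ then $\Psi\triangleright P\mid Q\xrightarrow{\alpha}P'\mid Q$, and symmetrically; (Rep) if $\Psi\triangleright P\mid !P\xrightarrow{\alpha}P'$ then $\Psi\triangleright !P\xrightarrow{\alpha}P'$; (Com) if $\mathcal{F}(P)=\Psi_P$,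 $\mathcal{F}(Q)=\Psi_Q$, $\Psi_Q\otimes\Psi\triangleright P\xrightarrow{\overline{M}N}P'$, $\Psi_P\otimes\Psi\triangleright Q\xrightarrow{\underline{K}N}Q'$ and $\Psi_Q\otimes\Psi_P\otimes\Psi\vdash M\leftrightarrow K$, then $\Psi\triangleright P\mid Q\xrightarrow{\tau}P'\mid Q'$, and symmetrically. Assertion processes and $\mathbf{0}$ have no transitions. Set-expressions in terms are identified with their values after substitution. Translation: $\textsc{dcrpsi}(\mathcal{D})=P_s\mid\big|_{e\in E}P_e$ with $P_s=(\!|(Ex',Re',In',0)|\!)\mid\overline{m}\langle(Ex',Re',In',0)\rangle.\mathbf{0}$ and $P_e=!\big(\mathbf{case}\ \varphi_e:\underline{m}(\lambda X_E,X_R,X_I,X_G)(X_E,X_R,X_I,X_G).(\overline{m}\langle U_e\rangle.\mathbf{0}\mid(\!|U_e|\!))\big)$, where $U_e=(X_E\cup\{e\},(X_R\setminus\{e\})\cup e\!\bullet\!\!\to,(X_I\setminus e\!\to\!\%)\cup e\!\to\!+,s(X_G))$ and $\varphi_e=(\to\!\bullet e,\to\!\diamond e,e)$. *)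

theory Defs
  imports Main
begin

record 'e dcr =
  events :: "'e set"
  marking :: "'e set \<times> 'e set \<times> 'e set"
  condition :: "('e \<times> 'e) set"
  response :: "('e \<times> 'e) set"
  milestone :: "('e \<times> 'e) set"
  inclusion :: "('e \<times> 'e) set"
  exclusion :: "('e \<times> 'e) set"

definition wf_dcr :: "'e dcr \<Rightarrow> bool" where
  "wf_dcr D \<longleftrightarrow> finite (events D)
     \<and> fst (marking D) \<subseteq> events D
     \<and> fst (snd (marking D)) \<subseteq> events D
     \<and> snd (snd (marking D)) \<subseteq> events D
     \<and> condition D \<subseteq> events D \<times> events D
     \<and> response D \<subseteq> events D \<times> events D
     \<and> milestone D \<subseteq> events D \<times> events D
     \<and> inclusion D \<subseteq> events D \<times> events D
     \<and> exclusion D \<subseteq> events D \<times> events D"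

type_synonym 'e assn = "'e set \<times> 'e set \<times> 'e set \<times> nat"

datatype 'e trm = Chan | Asn "'e assn"

type_synonym 'e cnd = "'e set \<times> 'e set \<times> 'e"

definition unit_assn :: "'e assn" where
  "unit_assn = ({}, {}, {}, 0)"

fun acomp :: "'e assn \<Rightarrow> 'e assn \<Rightarrow> 'e assn" where
  "acomp (Xe, Xr, Xi, G) (Xe', Xr', Xi', G') =
     (if G > G' then (Xe, Xr, Xi, G)
      else if G < G' then (Xe', Xr', Xi', G')
      else (Xe \<union> Xe', Xr \<union> Xr', Xi \<union> Xi', G))"

fun ent :: "'e assn \<Rightarrow> 'e cnd \<Rightarrow> bool" where
  "ent (Xe, Xr, Xi, G) (Co, Mi, e) \<longleftrightarrow>
     e \<in> Xi \<and> Xi \<inter> Co \<subseteq> Xe \<and> Xi \<inter> Mi \<inter> Xr = {}"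

text \<open>Channel equivalence M \<leftrightarrow> K is syntactic equality, independent of the assertion.\<close>

text \<open>An input prefix binds a tuple of variables (X_E, X_R, X_I, X_G); it is
  represented by a pattern function and a continuation function over the values
  substituted for the bound variables.\<close>
datatype 'e proc =
    PNil
  | PAss "'e assn"
  | POut "'e trm" "'e trm" "'e proc"
  | PInp "'e trm" "'e assn \<Rightarrow> 'e trm" "'e assn \<Rightarrow> 'e proc"
  | PCase "('e cnd \<times> 'e proc) list"
  | PPar "'e proc" "'e proc"
  | PRep "'e proc"

fun frame :: "'e proc \<Rightarrow> 'e assn" where
  "frame (PAss \<Psi>) = \<Psi>"
| "frame (PPar P Q) = acomp (frame P) (frame Q)"
| "frame _ = unit_assn"

datatype 'e act = AOut "'e trm" "'e trm" | AIn "'e trm" "'e trm" | ATau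

inductive ptrans :: "'e assn \<Rightarrow> 'e proc \<Rightarrow> 'e act \<Rightarrow> 'e proc \<Rightarrow> bool" where
  Out: "M = K \<Longrightarrow> ptrans \<Psi> (POut M N P) (AOut K N) P"
| Inp: "M = K \<Longrightarrow> ptrans \<Psi> (PInp M pat cont) (AIn K (pat L)) (cont L)"
| Case: "(\<phi>, P) \<in> set cs \<Longrightarrow> ptrans \<Psi> P \<alpha> P' \<Longrightarrow> ent \<Psi> \<phi> \<Longrightarrow>
           ptrans \<Psi> (PCase cs) \<alpha> P'"
| ParL: "ptrans (acomp \<Psi> (frame Q)) P \<alpha> P' \<Longrightarrow> ptrans \<Psi> (PPar P Q) \<alpha> (PPar P' Q)"
| ParR: "ptrans (acomp \<Psi> (frame P)) Q \<alpha> Q' \<Longrightarrow> ptrans \<Psi> (PPar P Q) \<alpha> (PPar P Q')"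
| Rep: "ptrans \<Psi> (PPar P (PRep P)) \<alpha> P' \<Longrightarrow> ptrans \<Psi> (PRep P) \<alpha> P'"
| ComL: "ptrans (acomp (frame Q) \<Psi>) P (AOut M N) P' \<Longrightarrow>
         ptrans (acomp (frame P) \<Psi>) Q (AIn K N) Q' \<Longrightarrow>
         M = K \<Longrightarrow> ptrans \<Psi> (PPar P Q) ATau (PPar P' Q')"
| ComR: "ptrans (acomp (frame Q) \<Psi>) P (AIn K N) P' \<Longrightarrow>
         ptrans (acomp (frame P) \<Psi>) Q (AOut M N) Q' \<Longrightarrow>
         M = K \<Longrightarrow> ptrans \<Psi> (PPar P Q) ATau (PPar P' Q')"

definition succs :: "('e \<times> 'e) set \<Rightarrow> 'e \<Rightarrow> 'e set" where
  "succs R e = {f. (e, f) \<in> R}"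

definition preds :: "('e \<times> 'e) set \<Rightarrow> 'e \<Rightarrow> 'e set" where
  "preds R e = {f. (f, e) \<in> R}"

fun U :: "'e dcr \<Rightarrow> 'e \<Rightarrow> 'e assn \<Rightarrow> 'e assn" where
  "U D e (XE, XR, XI, XG) =
     (XE \<union> {e}, (XR - {e}) \<union> succs (response D) e,
      (XI - succs (exclusion D) e) \<union> succs (inclusion D) e, Suc XG)"

definition phi :: "'e dcr \<Rightarrow> 'e \<Rightarrow> 'e cnd" where
  "phi D e = (preds (condition D) e, preds (milestone D) e, e)"

definition P_s :: "'e dcr \<Rightarrow> 'e proc" where
  "P_s D = (case marking D of (Xe, Xr, Xi) \<Rightarrow>
      PPar (PAss (Xe, Xr, Xi, 0)) (POut Chan (Asn (Xe, Xr, Xi, 0)) PNil))"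

definition P_e :: "'e dcr \<Rightarrow> 'e \<Rightarrow> 'e proc" where
  "P_e D e = PRep (PCase [(phi D e,
       PInp Chan (\<lambda>X. Asn X)
         (\<lambda>X. PPar (POut Chan (Asn (U D e X)) PNil) (PAss (U D e X))))])"

definition bigpar :: "'e set \<Rightarrow> ('e \<Rightarrow> 'e proc) \<Rightarrow> 'e proc" where
  "bigpar E f = foldr (\<lambda>e P. PPar (f e) P) (SOME xs. set xs = E \<and> distinct xs) PNil"

definition dcrpsi :: "'e dcr \<Rightarrow> 'e proc" where
  "dcrpsi D = PPar (P_s D) (bigpar (events D) (P_e D))"

fun n_unguarded_out :: "'e proc \<Rightarrow> nat" where
  "n_unguarded_out (POut M N P) = 1"
| "n_unguarded_out (PPar P Q) = n_unguarded_out P + n_unguarded_out Q"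
| "n_unguarded_out _ = 0"

end

theory Submission
  imports Defs
begin

text \<open>Proof idea: in every reachable process, each guarded subprocess has a fixed number of
  unguarded outputs once its guard is removed: none below an output prefix, a case guard or a
  replication, and exactly one below an input prefix. Hence firing an output lowers the count
  of unguarded outputs by one, firing an input raises it by one, and a communication leaves it
  unchanged. The initial process has exactly one unguarded output, the one in \<open>P_s\<close>.\<close>

inductive balanced :: "'e proc \<Rightarrow> bool" where
  balanced_PNil: "balanced PNil"
| balanced_PAss: "balanced (PAss \<Psi>)"
| balanced_POut: "balanced P \<Longrightarrow> n_unguarded_out P = 0 \<Longrightarrow> balanced (POut M N P)"
| balanced_PInp: "(\<And>L. balanced (cont L) \<and> n_unguarded_out (cont L) = 1) \<Longrightarrow>
    balanced (PInp M pat cont)"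
| balanced_PCase: "(\<And>\<phi> P. (\<phi>, P) \<in> set cs \<Longrightarrow> balanced P \<and> n_unguarded_out P = 0) \<Longrightarrow>
    balanced (PCase cs)"
| balanced_PPar: "balanced P \<Longrightarrow> balanced Q \<Longrightarrow> balanced (PPar P Q)"
| balanced_PRep: "balanced P \<Longrightarrow> n_unguarded_out P = 0 \<Longrightarrow> balanced (PRep P)"

inductive_cases balanced_POutE: "balanced (POut M N P)"
inductive_cases balanced_PInpE: "balanced (PInp M pat cont)"
inductive_cases balanced_PCaseE: "balanced (PCase cs)"
inductive_cases balanced_PParE: "balanced (PPar P Q)"
inductive_cases balanced_PRepE: "balanced (PRep P)"

definition out_count_shift :: "'e act \<Rightarrow> nat \<Rightarrow> nat \<Rightarrow> bool" where
  "out_count_shift \<alpha> n n' \<longleftrightarrow>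
     (case \<alpha> of AOut _ _ \<Rightarrow> n = Suc n' | AIn _ _ \<Rightarrow> n' = Suc n | ATau \<Rightarrow> n' = n)"

lemma ptrans_balanced:
  assumes "ptrans \<Psi> P \<alpha> P'" and "balanced P"
  shows "balanced P' \<and> out_count_shift \<alpha> (n_unguarded_out P) (n_unguarded_out P')"
  using assms
proof (induction rule: ptrans.induct)
  case Out
  then show ?case by (auto elim: balanced_POutE simp: out_count_shift_def)
next
  case Inp
  then show ?case by (auto elim: balanced_PInpE simp: out_count_shift_def)
next
  case (Case \<phi> P cs)
  then have "balanced P" and "n_unguarded_out P = 0" by (auto elim: balanced_PCaseE)
  with Case show ?case by (auto simp: out_count_shift_def split: act.splits)
next
  case (Rep \<Psi> P)
  then have "balanced P" and "n_unguarded_out P = 0" by (auto elim: balanced_PRepE)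
  with Rep have "balanced (PPar P (PRep P))" by (auto intro: balanced_PPar balanced_PRep)
  with Rep \<open>n_unguarded_out P = 0\<close> show ?case
    by (auto simp: out_count_shift_def split: act.splits)
qed (auto elim!: balanced_PParE intro: balanced_PPar simp: out_count_shift_def split: act.splits)

lemma tau_steps_preserve_balanced_count:
  assumes "(\<lambda>Q Q'. ptrans \<Psi> Q ATau Q')\<^sup>*\<^sup>* P P'" and "balanced P"
  shows "balanced P' \<and> n_unguarded_out P' = n_unguarded_out P"
  using assms
  by (induction rule: rtranclp_induct) (auto dest: ptrans_balanced simp: out_count_shift_def)

lemma balanced_foldr_PPar:
  assumes "\<And>e. e \<in> set xs \<Longrightarrow> balanced (f e) \<and> n_unguarded_out (f e) = 0"
  shows "balanced (foldr (\<lambda>e P. PPar (f e) P) xs PNil)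
    \<and> n_unguarded_out (foldr (\<lambda>e P. PPar (f e) P) xs PNil) = 0"
  using assms by (induction xs) (auto intro: balanced_PNil balanced_PPar)

lemma balanced_bigpar:
  assumes "\<And>e. balanced (f e) \<and> n_unguarded_out (f e) = 0"
  shows "balanced (bigpar E f) \<and> n_unguarded_out (bigpar E f) = 0"
  unfolding bigpar_def using assms by (intro balanced_foldr_PPar)

lemma balanced_P_e: "balanced (P_e D e) \<and> n_unguarded_out (P_e D e) = 0"
  unfolding P_e_def
  by (auto intro!: balanced_PRep balanced_PCase balanced_PInp balanced_PPar balanced_POut
      balanced_PNil balanced_PAss)

lemma balanced_P_s: "balanced (P_s D) \<and> n_unguarded_out (P_s D) = 1"
  unfolding P_s_def
  by (auto split: prod.splits intro!: balanced_PPar balanced_PAss balanced_POut balanced_PNil)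

lemma balanced_dcrpsi: "balanced (dcrpsi D) \<and> n_unguarded_out (dcrpsi D) = 1"
  using balanced_P_s balanced_bigpar[of "P_e D", OF balanced_P_e]
  unfolding dcrpsi_def by (auto intro: balanced_PPar)

theorem mainTheorem6:
  fixes D :: "'e dcr" and P :: "'e proc"
  assumes "wf_dcr D"
    and "(\<lambda>Q Q'. ptrans unit_assn Q ATau Q')\<^sup>*\<^sup>* (dcrpsi D) P"
  shows "n_unguarded_out P = 1"
  using tau_steps_preserve_balanced_count[OF assms(2)] balanced_dcrpsi[of D] by simp

end
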